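(* Let $\Sigma,\Gamma$ be finite alphabets and let $f:\Sigma^*\to\Gamma^*$ be subsequential. Then there exist an alphabet $\Delta$, a function $g:\Sigma^*\to\Delta^*$ that is $2$-TOSL on some tier on $\Sigma\cup\Delta$, and a homomorphism $h:\Delta^*\to\Gamma^*$ such that $f=h\circ g$.
   Context: Strings: $\lambda$ is the empty string; $\rtimes$ is a boundary symbol not in any alphabet. For $m\ge0$, $\mathrm{suff}^m(x)$ is the string of the last $m$ symbols of $\rtimes^mx$. $\mathrm{lcp}(A)$ is the longest common prefix of a set of strings $A$. An SFST is $T=\langle Q,\Sigma,\Gamma,q_0,\to,\sigma\rangle$ with finite state set $Q$, start state $q_0$, transition function $\to:Q\times\Sigma\to Q\times\Gamma^*$ and final output function $\sigma:Q\to\Gamma^*$; extended transitions $q\xrightarrow{x:y}r$ on strings are obtained by composing transitions and concatenating outputs. $T$ computes $f$ if $f(x)=y\sigma(q)$ whenever $q_0\xrightarrow{x:y}q$; $f$ is subsequential if some SFST computes it. A homomorphism $h:A^*\to B^*$ satisfies $h(xy)=h(x)h(y)$ for all $x,y$. For $g:\Sigma^*\to\Delta^*$: $g^{\gets}(x):=\mathrm{lcp}(\{g(xy)\mid y\in\Sigma^*\})$, and $g^{\to}_x$ is defined by $g(xy)=g^{\gets}(x)g^{\to}_x(y)$. A tier on an alphabet $A$ is a homomorphism $\tau:A^*\to A^*$ with $\tau(a)\in\{a,\lambda\}$ for all $a\in A$. $g$ is $j$-TOSL on a tier $\tau$ on $\Sigma\cup\Delta$ if for all $w,x\in\Sigma^*$,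 $\mathrm{suff}^{j-1}(\tau(g^{\gets}(w)))=\mathrm{suff}^{j-1}(\tau(g^{\gets}(x)))$ implies $g^{\to}_w=g^{\to}_x$. *)

theory Defs
  imports Main "HOL-Library.Sublist"
begin

(* Strings are lists. The boundary symbol \<rtimes> is modelled as None,
   alphabet symbols a as Some a. *)
definition suff :: "nat \<Rightarrow> 'c list \<Rightarrow> 'c option list" where
  "suff m x = drop (length x) (replicate m None @ map Some x)"

definition lcp :: "'c list set \<Rightarrow> 'c list" where
  "lcp A = (THE p. (\<forall>a\<in>A. prefix p a) \<and> (\<forall>q. (\<forall>a\<in>A. prefix q a) \<longrightarrow> prefix q p))"

fun run :: "('q \<Rightarrow> 'a \<Rightarrow> 'q \<times> 'b list) \<Rightarrow> 'q \<Rightarrow> 'a list \<Rightarrow> 'q \<times> 'b list" where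
  "run delta q [] = (q, [])"
| "run delta q (a # xs) =
     (let (r, u) = delta q a; (s, v) = run delta r xs in (s, u @ v))"

definition is_SFST ::
  "nat set \<Rightarrow> 'a set \<Rightarrow> 'b set \<Rightarrow> nat \<Rightarrow> (nat \<Rightarrow> 'a \<Rightarrow> nat \<times> 'b list) \<Rightarrow> (nat \<Rightarrow> 'b list) \<Rightarrow> bool" where
  "is_SFST Q Sig Gam q0 delta sigma \<longleftrightarrow>
     finite Q \<and> q0 \<in> Q \<and>
     (\<forall>q\<in>Q. \<forall>a\<in>Sig. fst (delta q a) \<in> Q \<and> snd (delta q a) \<in> lists Gam) \<and>
     (\<forall>q\<in>Q. sigma q \<in> lists Gam)"

definition computes ::
  "'a set \<Rightarrow> nat \<Rightarrow> (nat \<Rightarrow> 'a \<Rightarrow> nat \<times> 'b list) \<Rightarrow> (nat \<Rightarrow> 'b list) \<Rightarrow> ('a list \<Rightarrow> 'b list) \<Rightarrow> bool" where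
  "computes Sig q0 delta sigma f \<longleftrightarrow>
     (\<forall>x\<in>lists Sig. f x = snd (run delta q0 x) @ sigma (fst (run delta q0 x)))"

definition subsequential :: "'a set \<Rightarrow> 'b set \<Rightarrow> ('a list \<Rightarrow> 'b list) \<Rightarrow> bool" where
  "subsequential Sig Gam f \<longleftrightarrow>
     (\<exists>Q q0 delta sigma. is_SFST Q Sig Gam q0 delta sigma \<and> computes Sig q0 delta sigma f)"

definition is_hom :: "'c set \<Rightarrow> 'd set \<Rightarrow> ('c list \<Rightarrow> 'd list) \<Rightarrow> bool" where
  "is_hom A B h \<longleftrightarrow> (\<forall>x\<in>lists A. h x \<in> lists B) \<and>
     (\<forall>x\<in>lists A. \<forall>y\<in>lists A. h (x @ y) = h x @ h y)"

definition is_tier :: "'c set \<Rightarrow> ('c list \<Rightarrow> 'c list) \<Rightarrow> bool" where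
  "is_tier A tau \<longleftrightarrow> is_hom A A tau \<and> (\<forall>a\<in>A. tau [a] = [a] \<or> tau [a] = [])"

definition gl :: "'a set \<Rightarrow> ('a list \<Rightarrow> 'd list) \<Rightarrow> 'a list \<Rightarrow> 'd list" where
  "gl Sig g x = lcp {g (x @ y) | y. y \<in> lists Sig}"

(* g^{\<rightarrow>}_x(y), determined by g(xy) = g^{\<leftarrow>}(x) g^{\<rightarrow>}_x(y) *)
definition gr :: "'a set \<Rightarrow> ('a list \<Rightarrow> 'd list) \<Rightarrow> 'a list \<Rightarrow> 'a list \<Rightarrow> 'd list" where
  "gr Sig g x y = drop (length (gl Sig g x)) (g (x @ y))"

(* g : Sig* \<rightarrow> Del* is j-TOSL on tier tau on Sig \<union> Del
   (Sig \<union> Del realised as the disjoint union Sig <+> Del) *)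
definition TOSL ::
  "nat \<Rightarrow> 'a set \<Rightarrow> 'd set \<Rightarrow> (('a + 'd) list \<Rightarrow> ('a + 'd) list) \<Rightarrow> ('a list \<Rightarrow> 'd list) \<Rightarrow> bool" where
  "TOSL j Sig Del tau g \<longleftrightarrow>
     (\<forall>w\<in>lists Sig. \<forall>x\<in>lists Sig.
        suff (j - 1) (tau (map Inr (gl Sig g w))) = suff (j - 1) (tau (map Inr (gl Sig g x)))
        \<longrightarrow> (\<forall>y\<in>lists Sig. gr Sig g w y = gr Sig g x y))"

end

theory Submission
  imports Defs
begin

(* Let g write down the run of an SFST for f as a string of marks: a start mark, one mark per
   transition recording the state reached and the output emitted, and a final mark recording the
   last state and its final output. The homomorphism h sends each mark to the output it records,
   so h (g x) = f x. Since the final mark differs from every transition mark, g<-(w) is exactly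
   the marked run on w, whose last mark names the state reached after w; and g->_w, the marked
   run from that state, depends on that state alone. So g is 2-TOSL on the trivial tier. *)

lemma run_append:
  "run d q (x @ y) = (fst (run d (fst (run d q x)) y), snd (run d q x) @ snd (run d (fst (run d q x)) y))"
  by (induction x arbitrary: q) (auto split: prod.split)

lemma run_in_states:
  assumes "is_SFST Q Sig Gam q0 d s" "q \<in> Q" "x \<in> lists Sig"
  shows "fst (run d q x) \<in> Q"
  using assms(2,3)
proof (induction x arbitrary: q)
  case (Cons a x)
  then have "fst (d q a) \<in> Q"
    using assms(1) unfolding is_SFST_def by auto
  then have "fst (run d (fst (d q a)) x) \<in> Q"
    using Cons by simp
  then show ?case
    by (simp add: case_prod_beta)
qed simp

lemma lcp_eqI:
  assumes "\<forall>a\<in>A. prefix p a" "\<forall>q. (\<forall>a\<in>A. prefix q a) \<longrightarrow> prefix q p"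
  shows "lcp A = p"
  unfolding lcp_def using assms by (intro the_equality) (auto intro: prefix_order.antisym)

lemma lcp_singleton: "lcp {a} = a"
  by (rule lcp_eqI) auto

lemma lcp_eq_branching_prefix:
  assumes "\<forall>a\<in>A. prefix p a" "p @ c # u \<in> A" "p @ c' # u' \<in> A" "c \<noteq> c'"
  shows "lcp A = p"
proof (rule lcp_eqI)
  show "\<forall>q. (\<forall>a\<in>A. prefix q a) \<longrightarrow> prefix q p"
  proof (intro allI impI, rule ccontr)
    fix q assume common: "\<forall>a\<in>A. prefix q a" and "\<not> prefix q p"
    moreover have "prefix q (p @ c # u)" "prefix q (p @ c' # u')"
      using common assms(2,3) by auto
    ultimately obtain r r' where "q = p @ r" "prefix r (c # u)" "q = p @ r'" "prefix r' (c' # u')"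
      by (auto simp: prefix_append)
    then show False
      using assms(4) \<open>\<not> prefix q p\<close> by (cases r) auto
  qed
qed (use assms(1) in blast)

lemma is_hom_concat_map:
  "\<forall>a\<in>A. \<phi> a \<in> lists B \<Longrightarrow> is_hom A B (\<lambda>y. concat (map \<phi> y))"
  unfolding is_hom_def by (auto simp: in_lists_conv_set; blast)

lemma is_tier_id: "is_tier A id"
  by (simp add: is_tier_def is_hom_def)

lemma concat_map_inv_into_map:
  "inj_on e M \<Longrightarrow> set ms \<subseteq> M \<Longrightarrow> concat (map (\<phi> \<circ> inv_into M e) (map e ms)) = concat (map \<phi> ms)"
  by (auto simp: subset_iff inv_into_f_f intro!: arg_cong[where f = concat])

lemma suff_Suc_0: "x \<noteq> [] \<Longrightarrow> suff (Suc 0) x = [Some (last x)]"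
  unfolding suff_def by (induction x rule: rev_induct) auto

lemma TOSL_2_idI:
  assumes nonempty: "\<And>w. w \<in> lists Sig \<Longrightarrow> gl Sig g w \<noteq> []"
    and last_determines: "\<And>w x y. w \<in> lists Sig \<Longrightarrow> x \<in> lists Sig \<Longrightarrow> y \<in> lists Sig \<Longrightarrow>
           last (gl Sig g w) = last (gl Sig g x) \<Longrightarrow> gr Sig g w y = gr Sig g x y"
  shows "TOSL 2 Sig Del id g"
  unfolding TOSL_def
proof (intro ballI impI)
  fix w x y
  assume w: "w \<in> lists Sig" and x: "x \<in> lists Sig" and y: "y \<in> lists Sig"
    and "suff (2 - 1) (id (map Inr (gl Sig g w))) = suff (2 - 1) (id (map Inr (gl Sig g x)))"
  then have "last (gl Sig g w) = last (gl Sig g x)"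
    using nonempty[OF w] nonempty[OF x] by (simp add: suff_Suc_0 last_map)
  then show "gr Sig g w y = gr Sig g x y"
    using last_determines w x y by blast
qed

datatype ('q, 'b) mark =
  Step (mark_state: 'q) (mark_output: "'b list")
| Final (mark_state: 'q) (mark_output: "'b list")

fun steps :: "('q \<Rightarrow> 'a \<Rightarrow> 'q \<times> 'b list) \<Rightarrow> 'q \<Rightarrow> 'a list \<Rightarrow> ('q, 'b) mark list" where
  "steps d q [] = []"
| "steps d q (a # x) = Step (fst (d q a)) (snd (d q a)) # steps d (fst (d q a)) x"

definition marked_prefix :: "('q \<Rightarrow> 'a \<Rightarrow> 'q \<times> 'b list) \<Rightarrow> 'q \<Rightarrow> 'a list \<Rightarrow> ('q, 'b) mark list" where
  "marked_prefix d q x = Step q [] # steps d q x"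

definition marked_run ::
  "('q \<Rightarrow> 'a \<Rightarrow> 'q \<times> 'b list) \<Rightarrow> ('q \<Rightarrow> 'b list) \<Rightarrow> 'q \<Rightarrow> 'a list \<Rightarrow> ('q, 'b) mark list" where
  "marked_run d s q x = marked_prefix d q x @ [Final (fst (run d q x)) (s (fst (run d q x)))]"

definition mark_alphabet ::
  "'q set \<Rightarrow> 'a set \<Rightarrow> 'q \<Rightarrow> ('q \<Rightarrow> 'a \<Rightarrow> 'q \<times> 'b list) \<Rightarrow> ('q \<Rightarrow> 'b list) \<Rightarrow> ('q, 'b) mark set" where
  "mark_alphabet Q Sig q0 d s =
     insert (Step q0 []) ((\<lambda>(q, a). Step (fst (d q a)) (snd (d q a))) ` (Q \<times> Sig) \<union> (\<lambda>q. Final q (s q)) ` Q)"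

lemma steps_append: "steps d q (x @ y) = steps d q x @ steps d (fst (run d q x)) y"
  by (induction x arbitrary: q) (auto split: prod.split)

lemma concat_map_output_steps: "concat (map mark_output (steps d q x)) = snd (run d q x)"
  by (induction x arbitrary: q) (auto split: prod.split)

lemma mark_state_last_steps: "mark_state (last (Step q u # steps d q x)) = fst (run d q x)"
  by (induction x arbitrary: q u) (auto split: prod.split)

lemma marked_prefix_ne_Nil [simp]: "marked_prefix d q x \<noteq> []"
  by (simp add: marked_prefix_def)

lemma marked_run_append:
  "marked_run d s q (x @ y) = marked_prefix d q x @ tl (marked_run d s (fst (run d q x)) y)"
  by (simp add: marked_run_def marked_prefix_def steps_append run_append)

lemma mark_state_last_marked_prefix: "mark_state (last (marked_prefix d q x)) = fst (run d q x)"
  unfolding marked_prefix_def by (rule mark_state_last_steps)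

lemma concat_map_output_marked_run:
  "concat (map mark_output (marked_run d s q x)) = snd (run d q x) @ s (fst (run d q x))"
  by (simp add: marked_run_def marked_prefix_def concat_map_output_steps)

lemma finite_mark_alphabet: "finite Q \<Longrightarrow> finite Sig \<Longrightarrow> finite (mark_alphabet Q Sig q0 d s)"
  unfolding mark_alphabet_def by simp

lemma Step_in_mark_alphabet:
  "q \<in> Q \<Longrightarrow> a \<in> Sig \<Longrightarrow> Step (fst (d q a)) (snd (d q a)) \<in> mark_alphabet Q Sig q0 d s"
  unfolding mark_alphabet_def by (intro insertI2 UnI1 image_eqI[where x = "(q, a)"]) auto

lemma Final_in_mark_alphabet: "q \<in> Q \<Longrightarrow> Final q (s q) \<in> mark_alphabet Q Sig q0 d s"
  unfolding mark_alphabet_def by blast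

lemma set_steps_subset_mark_alphabet:
  assumes "is_SFST Q Sig Gam q0 d s" "q \<in> Q" "x \<in> lists Sig"
  shows "set (steps d q x) \<subseteq> mark_alphabet Q Sig q0 d s"
  using assms(2,3)
proof (induction x arbitrary: q)
  case (Cons a x)
  then have "Step (fst (d q a)) (snd (d q a)) \<in> mark_alphabet Q Sig q0 d s"
    by (simp add: Step_in_mark_alphabet)
  moreover have "fst (d q a) \<in> Q"
    using assms(1) Cons.prems unfolding is_SFST_def by auto
  ultimately show ?case
    using Cons by simp
qed simp

lemma set_marked_run_subset_mark_alphabet:
  assumes "is_SFST Q Sig Gam q0 d s" "x \<in> lists Sig"
  shows "set (marked_run d s q0 x) \<subseteq> mark_alphabet Q Sig q0 d s"
proof -
  have "q0 \<in> Q" using assms(1) unfolding is_SFST_def by simp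
  then show ?thesis
    using set_steps_subset_mark_alphabet[OF assms(1) _ assms(2)] run_in_states[OF assms(1) _ assms(2)]
    unfolding marked_run_def marked_prefix_def mark_alphabet_def by auto
qed

lemma mark_output_in_lists:
  assumes "is_SFST Q Sig Gam q0 d s" "m \<in> mark_alphabet Q Sig q0 d s"
  shows "mark_output m \<in> lists Gam"
  using assms unfolding is_SFST_def mark_alphabet_def by fastforce

lemma gl_encoded_marked_run:
  assumes sfst: "is_SFST Q Sig Gam q0 d s" and inj: "inj_on e (mark_alphabet Q Sig q0 d s)"
    and "a \<in> Sig" "w \<in> lists Sig"
  shows "gl Sig (\<lambda>x. map e (marked_run d s q0 x)) w = map e (marked_prefix d q0 w)"
proof -
  let ?M = "mark_alphabet Q Sig q0 d s" and ?g = "\<lambda>x. map e (marked_run d s q0 x)"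
  define q where "q = fst (run d q0 w)"
  have "q \<in> Q"
    using sfst run_in_states[OF sfst _ assms(4)] unfolding q_def is_SFST_def by blast
  then have step: "Step (fst (d q a)) (snd (d q a)) \<in> ?M" and final: "Final q (s q) \<in> ?M"
    using assms(3) by (simp_all add: Step_in_mark_alphabet Final_in_mark_alphabet)
  have g_step: "?g (w @ [a]) = map e (marked_prefix d q0 w) @ e (Step (fst (d q a)) (snd (d q a)))
          # [e (Final (fst (d q a)) (s (fst (d q a))))]"
    and g_stop: "?g (w @ []) = map e (marked_prefix d q0 w) @ e (Final q (s q)) # []"
    unfolding marked_run_append q_def[symmetric] by (simp_all add: marked_run_def marked_prefix_def case_prod_beta)
  show ?thesis
    unfolding gl_def
  proof (rule lcp_eq_branching_prefix)
    show "\<forall>v\<in>{?g (w @ y) |y. y \<in> lists Sig}. prefix (map e (marked_prefix d q0 w)) v"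
      by (auto simp: marked_run_append)
    show "map e (marked_prefix d q0 w) @ e (Step (fst (d q a)) (snd (d q a)))
          # [e (Final (fst (d q a)) (s (fst (d q a))))] \<in> {?g (w @ y) |y. y \<in> lists Sig}"
      using g_step assms(3) by (intro CollectI exI[of _ "[a]"]) simp
    show "map e (marked_prefix d q0 w) @ e (Final q (s q)) # [] \<in> {?g (w @ y) |y. y \<in> lists Sig}"
      using g_stop by (intro CollectI exI[of _ "[]"]) simp
    show "e (Step (fst (d q a)) (snd (d q a))) \<noteq> e (Final q (s q))"
      using inj_on_eq_iff[OF inj step final] by simp
  qed
qed

lemma TOSL_2_encoded_marked_run:
  assumes sfst: "is_SFST Q Sig Gam q0 d s" and inj: "inj_on e (mark_alphabet Q Sig q0 d s)"
  shows "TOSL 2 Sig Del id (\<lambda>x. map e (marked_run d s q0 x))" (is "TOSL 2 Sig Del id ?g")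
proof (cases "Sig = {}")
  case True
  then have "lists Sig = {[]}" by (auto simp: lists_empty)
  then show ?thesis
    by (intro TOSL_2_idI) (auto simp: gl_def lcp_singleton marked_run_def)
next
  case False
  then obtain a where a: "a \<in> Sig" by blast
  show ?thesis
  proof (rule TOSL_2_idI)
    fix w assume "w \<in> lists Sig"
    then show "gl Sig ?g w \<noteq> []"
      by (simp add: gl_encoded_marked_run[OF sfst inj a])
  next
    fix w x y assume w: "w \<in> lists Sig" and x: "x \<in> lists Sig"
      and "last (gl Sig ?g w) = last (gl Sig ?g x)"
    then have "e (last (marked_prefix d q0 w)) = e (last (marked_prefix d q0 x))"
      by (simp add: gl_encoded_marked_run[OF sfst inj a] last_map)
    moreover have "last (marked_prefix d q0 v) \<in> mark_alphabet Q Sig q0 d s" if "v \<in> lists Sig" for v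
      using set_marked_run_subset_mark_alphabet[OF sfst that] by (auto simp: marked_run_def marked_prefix_def)
    ultimately have "last (marked_prefix d q0 w) = last (marked_prefix d q0 x)"
      using inj_on_eq_iff[OF inj] w x by blast
    then have "fst (run d q0 w) = fst (run d q0 x)"
      by (metis mark_state_last_marked_prefix)
    then show "gr Sig ?g w y = gr Sig ?g x y"
      by (simp add: gr_def gl_encoded_marked_run[OF sfst inj a w] gl_encoded_marked_run[OF sfst inj a x]
          marked_run_append)
  qed
qed

theorem proposition21:
  fixes Sig :: "'a set" and Gam :: "'b set" and f :: "'a list \<Rightarrow> 'b list"
  assumes "finite Sig" and "finite Gam"
    and "\<forall>x\<in>lists Sig. f x \<in> lists Gam"
    and "subsequential Sig Gam f"
  shows "\<exists>(Del :: nat set) (g :: 'a list \<Rightarrow> nat list) tau (h :: nat list \<Rightarrow> 'b list).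
           finite Del \<and>
           (\<forall>x\<in>lists Sig. g x \<in> lists Del) \<and>
           is_tier (Sig <+> Del) tau \<and> TOSL 2 Sig Del tau g \<and>
           is_hom Del Gam h \<and>
           (\<forall>x\<in>lists Sig. f x = h (g x))"
proof -
  obtain Q q0 d s where sfst: "is_SFST Q Sig Gam q0 d s" and computes: "computes Sig q0 d s f"
    using assms(4) unfolding subsequential_def by blast
  define M where "M = mark_alphabet Q Sig q0 d s"
  have "finite M"
    using sfst assms(1) unfolding M_def is_SFST_def by (simp add: finite_mark_alphabet)
  then obtain e :: "(nat, 'b) mark \<Rightarrow> nat" where inj: "inj_on e M"
    using finite_imp_inj_to_nat_seg by blast
  define g where "g x = map e (marked_run d s q0 x)" for x
  define h where "h y = concat (map (mark_output \<circ> inv_into M e) y)" for y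
  have marks_in: "set (marked_run d s q0 x) \<subseteq> M" if "x \<in> lists Sig" for x
    using set_marked_run_subset_mark_alphabet[OF sfst that] unfolding M_def .
  have "\<forall>k\<in>e ` M. (mark_output \<circ> inv_into M e) k \<in> lists Gam"
    using mark_output_in_lists[OF sfst] inv_into_into[of _ e M] unfolding M_def by simp
  then have "is_hom (e ` M) Gam h"
    unfolding h_def by (rule is_hom_concat_map)
  moreover have "f x = h (g x)" if "x \<in> lists Sig" for x
  proof -
    have "h (g x) = concat (map mark_output (marked_run d s q0 x))"
      unfolding h_def g_def by (rule concat_map_inv_into_map[OF inj marks_in[OF that]])
    then show ?thesis
      using computes that by (simp add: computes_def concat_map_output_marked_run)
  qed
  moreover have "TOSL 2 Sig (e ` M) id g"
    using TOSL_2_encoded_marked_run[OF sfst inj[unfolded M_def]] unfolding g_def .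
  moreover have "g x \<in> lists (e ` M)" if "x \<in> lists Sig" for x
    using marks_in[OF that] unfolding g_def by (auto simp: subset_iff)
  ultimately show ?thesis
    using \<open>finite M\<close> is_tier_id by (intro exI[of _ "e ` M"] exI[of _ g] exI[of _ id] exI[of _ h]) simp
qed

end
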